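(* Let $d_0<d_1<\cdots$ be the increasing enumeration of $\{m\ge1:\ c_m=0\}$ and $z_n=\left(\frac{d_{4n}+1}{4}-n\right)\bmod 2$ for $n\ge0$. Then for every integer $m\ge2$ and every integer $n\in\left[2^{2m},\frac43\,2^{2m}\right]$ we have $z_n=0$.
   Context: For $n\in\mathbb{N}$ let $s_2(n)$ be the sum of the binary digits of $n$ and $t_n=s_2(n)\bmod 2$ (the Prouhet–Thue–Morse sequence). Let $F(X)=\sum_{n\ge1}t_nX^n\in\mathbb{F}_2[[X]]$ and let $G(X)=\sum_{n\ge1}c_nX^n\in\mathbb{F}_2[[X]]$ be its compositional inverse, i.e. $F(G(X))=G(F(X))=X$. The $c_n$ are identified with integers in $\{0,1\}$. The sequence $(d_n)$ is indexed from $0$, so $d_0=3$, and $\frac{d_{4n}+1}{4}$ is always an integer. *)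

theory Defs
  imports "HOL-Computational_Algebra.Formal_Power_Series" "HOL-Library.Z2" "HOL-Library.Infinite_Set"
begin

fun s2 :: "nat \<Rightarrow> nat" where
  "s2 n = (if n = 0 then 0 else n mod 2 + s2 (n div 2))"

definition tm :: "nat \<Rightarrow> bit" where
  "tm n = of_nat (s2 n mod 2)"

definition F_tm :: "bit fps" where
  "F_tm = Abs_fps (\<lambda>n. if n = 0 then 0 else tm n)"

definition G_tm :: "bit fps" where
  "G_tm = fps_inv F_tm"

definition c_tm :: "nat \<Rightarrow> bit" where
  "c_tm n = fps_nth G_tm n"

definition d_tm :: "nat \<Rightarrow> nat" where
  "d_tm k = enumerate {m. m \<ge> 1 \<and> c_tm m = 0} k"

definition z_tm :: "nat \<Rightarrow> int" where
  "z_tm n = (int ((d_tm (4*n) + 1) div 4) - int n) mod 2"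

end

theory Submission
  imports Defs
begin

text \<open>
  Over \<open>\<bbbF>\<^sub>2\<close> squaring is the Frobenius map \<open>A(X)\<^sup>2 = A(X\<^sup>2)\<close>, so the recursion
  \<open>t\<^sub>2\<^sub>n = t\<^sub>n\<close>, \<open>t\<^sub>2\<^sub>n\<^sub>+\<^sub>1 = 1 + t\<^sub>n\<close> says that \<open>(1 + X\<^sup>2) F = (1 + X\<^sup>2)(1 + X) F\<^sup>2 + X\<close>,
  and this quadratic equation has at most one solution without constant term.
  Let \<open>Q = \<Sum> X\<^sup>8\<^sup>s\<close>, \<open>s\<close> ranging over the Moser--de Bruijn numbers (base-4 digits in
  \<open>{0, 1}\<close>). Every \<open>N\<close> is uniquely \<open>a + 2b\<close> with \<open>a\<close>, \<open>b\<close> Moser--de Bruijn, so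
  \<open>Q \<cdot> Q\<^sup>2 = 1 / (1 + X\<^sup>8)\<close> and \<open>w = (1 + X + X\<^sup>2 + X\<^sup>3) Q\<close> satisfies \<open>w\<^sup>3 = 1 + X\<close>.
  This makes \<open>G = (w + 1 + X) / X\<close> satisfy the equation of \<open>F\<close> with \<open>X\<close> in place of \<open>F\<close>
  and \<open>G\<close> in place of \<open>X\<close>; by uniqueness \<open>F \<circ> G = X\<close>.

  Reading off coefficients, for \<open>m \<ge> 1\<close> we get \<open>c\<^sub>m = 1\<close> iff \<open>\<lfloor>(m + 1)/4\<rfloor>\<close> is twice a
  Moser--de Bruijn number. Hence the zeros of \<open>c\<close> come in blocks of four, \<open>d\<^sub>4\<^sub>n = 4e - 1\<close>
  for the \<open>n\<close>-th index \<open>e\<close> that is not twice a Moser--de Bruijn number, and \<open>z\<^sub>n\<close> is the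
  parity of the number of those that are and lie below \<open>e\<close>. For \<open>4\<^sup>m \<le> n \<le> 4\<^sup>m\<^sup>+\<^sup>1/3\<close>
  we have \<open>e = n + 2\<^sup>m \<in> [4\<^sup>m, 2 \<cdot> 4\<^sup>m)\<close>, where there are none, and exactly \<open>2\<^sup>m\<close> of them
  below \<open>4\<^sup>m\<close>.
\<close>

unbundle fps_syntax

text \<open>\<open>HOL-Library.Z2\<close> rewrites \<open>+\<close> and \<open>*\<close> on \<open>bit\<close> to XOR and AND; we keep ring normal forms.\<close>
declare add_bit_eq_xor [simp del] mult_bit_eq_and [simp del]

section \<open>Enumerations of sets of natural numbers\<close>

lemma enumerate_eqI:
  fixes S :: "nat set"
  assumes "infinite S" and "x \<in> S" and "card {y \<in> S. y < x} = n"
  shows "enumerate S n = x"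
proof -
  obtain k where k: "enumerate S k = x"
    using enumerate_Ex[OF assms(1,2)] by blast
  have "{y \<in> S. y < x} = enumerate S ` {..<k}"
  proof (rule set_eqI, rule iffI)
    fix y
    assume y: "y \<in> {y \<in> S. y < x}"
    then obtain i where "enumerate S i = y"
      using enumerate_Ex[OF assms(1)] by blast
    moreover have "i < k"
      using y k assms(1) calculation by auto
    ultimately show "y \<in> enumerate S ` {..<k}"
      by auto
  qed (use k assms(1) enumerate_in_set[OF assms(1)] in auto)
  then have "card {y \<in> S. y < x} = k"
    using card_image[OF inj_on_subset[OF inj_enumerate[OF assms(1)]]] by simp
  then show ?thesis
    using assms(3) k by simp
qed

lemma card_less_mult_div:
  "card {w. w < k * e \<and> P (w div k)} = k * card {j. j < e \<and> P (j :: nat)}"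
proof -
  define f where "f = (\<lambda>(j, r). k * j + r :: nat)"
  have "{w. w < k * e \<and> P (w div k)} = f ` ({j. j < e \<and> P j} \<times> {..<k})"
  proof (rule set_eqI, rule iffI)
    fix w
    assume w: "w \<in> {w. w < k * e \<and> P (w div k)}"
    then have "0 < k"
      by (cases k) auto
    then have "w div k < e" "w mod k < k"
      using w by (auto simp: less_mult_imp_div_less mult.commute)
    then show "w \<in> f ` ({j. j < e \<and> P j} \<times> {..<k})"
      using w by (intro image_eqI[of _ _ "(w div k, w mod k)"]) (auto simp: f_def)
  next
    fix w
    assume "w \<in> f ` ({j. j < e \<and> P j} \<times> {..<k})"
    then obtain j r where jr: "j < e" "P j" "r < k" "w = k * j + r"
      by (auto simp: f_def)
    have "k * Suc j \<le> k * e"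
      using jr(1) by (intro mult_le_mono2) simp
    then show "w \<in> {w. w < k * e \<and> P (w div k)}"
      using jr by simp
  qed
  moreover have "inj_on f ({j. j < e \<and> P j} \<times> {..<k})"
    by (rule inj_on_inverseI[where g = "\<lambda>w. (w div k, w mod k)"]) (auto simp: f_def)
  ultimately show ?thesis
    by (simp add: card_image card_cartesian_product)
qed

section \<open>Power series over \<open>\<bbbF>\<^sub>2\<close>\<close>

lemma bit_add_self [simp]: "(x::bit) + x = 0"
  by (cases x) auto

lemma bit_mult_self [simp]: "(x::bit) * x = x"
  by (cases x) auto

lemma fps_bit_add_self [simp]: "(f::bit fps) + f = 0"
  by (rule fps_ext) (simp only: fps_add_nth bit_add_self fps_zero_nth)

lemma fps_bit_add_eq_0_iff: "(f::bit fps) + g = 0 \<longleftrightarrow> f = g"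
  by (metis add.assoc add.right_neutral fps_bit_add_self)

lemma fps_bit_numeral_Bit0 [simp]: "(numeral (num.Bit0 k) :: bit fps) = 0"
  by (simp add: numeral_Bit0)

lemma fps_bit_numeral_Bit1 [simp]: "(numeral (num.Bit1 k) :: bit fps) = 1"
  by (simp add: numeral_Bit1)

lemma fps_bit_square_nth: "((A::bit fps)^2) $ n = (if even n then A $ (n div 2) else 0)"
proof -
  define g where "g i = A $ i * A $ (n - i)" for i
  define L where "L = {i. 2*i < n}"
  define R where "R = {i. n < 2*i \<and> i \<le> n}"
  define C where "C = {i. 2*i = n}"
  have fin: "finite L" "finite R" "finite C"
    unfolding L_def R_def C_def by (auto intro: finite_subset[of _ "{..n}"])
  have "{0..n} = (L \<union> C) \<union> R"
    unfolding L_def R_def C_def by auto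
  moreover have "L \<inter> C = {}" "(L \<union> C) \<inter> R = {}"
    unfolding L_def R_def C_def by auto
  ultimately have "(A^2) $ n = sum g L + sum g C + sum g R"
    using fin by (simp add: power2_eq_square fps_mult_nth g_def sum.union_disjoint)
  also have "sum g R = sum g L"
  proof -
    have "R = (\<lambda>i. n - i) ` L"
    proof (rule set_eqI, rule iffI)
      fix x assume "x \<in> R"
      then show "x \<in> (\<lambda>i. n - i) ` L"
        unfolding L_def R_def by (intro image_eqI[of _ _ "n - x"]) auto
    qed (auto simp: L_def R_def)
    moreover have "inj_on (\<lambda>i. n - i) L"
      unfolding L_def inj_on_def by auto
    ultimately show ?thesis
      by (simp add: sum.reindex L_def g_def mult.commute)
  qed
  also have "C = (if even n then {n div 2} else {})"
    unfolding C_def by auto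
  then have "sum g C = (if even n then A $ (n div 2) else 0)"
    by (auto simp: g_def)
  finally show ?thesis
    by (simp add: add.commute add.left_commute)
qed

lemma fps_bit_quadratic_unique:
  fixes a b c Y Z :: "bit fps"
  assumes "a $ 0 \<noteq> 0" and "Y $ 0 = 0" and "Z $ 0 = 0"
    and "a * Y = b * Y^2 + c" and "a * Z = b * Z^2 + c"
  shows "Y = Z"
proof -
  define D where "D = Y + Z"
  have "D * (a + b * D) = (a * Y + (b * Y^2 + c)) + (a * Z + (b * Z^2 + c))"
    by (simp add: D_def algebra_simps power2_eq_square)
  then have "D * (a + b * D) = 0"
    using assms(4,5) by simp
  moreover have "a + b * D \<noteq> 0"
  proof
    assume "a + b * D = 0"
    then have "(a + b * D) $ 0 = 0" by simp
    then show False using assms(1-3) by (simp add: D_def)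
  qed
  ultimately have "D = 0" by simp
  then show ?thesis
    by (simp add: D_def fps_bit_add_eq_0_iff)
qed

lemma fps_bit_geometric:
  assumes "0 < k"
  shows "(1 + fps_X ^ k) * Abs_fps (\<lambda>n. of_bool (k dvd n)) = (1 :: bit fps)"
proof (rule fps_ext)
  fix n
  have "((1 + fps_X ^ k) * Abs_fps (\<lambda>n. of_bool (k dvd n))) $ n
      = of_bool (k dvd n) + (if k \<le> n then of_bool (k dvd n - k) else (0 :: bit))"
    by (simp add: distrib_right fps_X_power_mult_nth)
  then show "((1 + fps_X ^ k) * Abs_fps (\<lambda>n. of_bool (k dvd n))) $ n = (1 :: bit fps) $ n"
    using assms by (cases "k \<le> n") (auto simp: dvd_minus_self dvd_imp_le)
qed

lemma fps_inv_eqI: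
  fixes f g :: "'a::field fps"
  assumes "f $ 0 = 0" and "f $ 1 \<noteq> 0" and "g $ 0 = 0" and "f oo g = fps_X"
  shows "fps_inv f = g"
proof -
  have "fps_inv f = fps_inv f oo (f oo g)"
    by (simp add: assms(4))
  also have "\<dots> = (fps_inv f oo f) oo g"
    by (rule fps_compose_assoc[OF assms(3,1)])
  also have "\<dots> = g"
    by (simp add: fps_inv[OF assms(1,2)] assms(3))
  finally show ?thesis .
qed

section \<open>The Thue--Morse series\<close>

declare s2.simps [simp del]

lemma tm_eq_of_nat: "tm n = of_nat (s2 n)"
proof -
  have "(of_nat (s2 n) :: bit) = of_nat 2 * of_nat (s2 n div 2) + of_nat (s2 n mod 2)"
    by (metis div_mult_mod_eq mult.commute of_nat_add of_nat_mult)
  then show ?thesis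
    by (simp add: tm_def)
qed

lemma tm_0 [simp]: "tm 0 = 0"
  by (simp add: tm_def s2.simps[of 0])

lemma tm_double: "tm (2*k) = tm k"
  by (cases "k = 0") (simp_all add: tm_def s2.simps[of "2*k"])

lemma tm_double_Suc: "tm (Suc (2*k)) = 1 + tm k"
  by (simp add: tm_eq_of_nat s2.simps[of "Suc (2*k)"])

lemma F_tm_nth: "F_tm $ n = tm n"
  by (simp add: F_tm_def)

lemma F_tm_functional_equation:
  "(1 + fps_X^2) * F_tm = (1 + fps_X^2) * (1 + fps_X) * F_tm^2 + fps_X"
proof -
  define E :: "bit fps" where "E = Abs_fps (\<lambda>n. of_bool (even n))"
  have E: "(1 + fps_X^2) * E = 1"
  proof (rule fps_ext)
    fix n
    have "((1 + fps_X^2) * E) $ n = E $ n + (if 2 \<le> n then E $ (n - 2) else 0)"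
      by (simp add: distrib_right fps_X_power_mult_nth)
    then show "((1 + fps_X^2) * E) $ n = (1 :: bit fps) $ n"
      by (cases "n < 2") (auto simp: E_def)
  qed
  have "F_tm = (1 + fps_X) * F_tm^2 + fps_X * E"
  proof (rule fps_ext)
    fix n
    show "F_tm $ n = ((1 + fps_X) * F_tm^2 + fps_X * E) $ n"
    proof (cases "even n")
      case True
      then obtain k where "n = 2*k" ..
      then show ?thesis
        using tm_double[of k] by (cases k) (simp_all add: distrib_right fps_bit_square_nth E_def F_tm_nth)
    next
      case False
      then have "n = Suc (2 * (n div 2))" by simp
      then obtain k where "n = Suc (2*k)" ..
      then show ?thesis
        by (simp add: distrib_right fps_bit_square_nth E_def F_tm_nth tm_double_Suc add.commute)
    qed
  qed
  then have "(1 + fps_X^2) * F_tm = (1 + fps_X^2) * ((1 + fps_X) * F_tm^2 + fps_X * E)"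
    by (rule arg_cong)
  also have "\<dots> = (1 + fps_X^2) * (1 + fps_X) * F_tm^2 + fps_X * ((1 + fps_X^2) * E)"
    by (simp add: algebra_simps)
  finally show ?thesis
    by (simp only: E mult_1_right)
qed

section \<open>Moser--de Bruijn numbers\<close>

fun moser_de_bruijn :: "nat \<Rightarrow> bool" where
  "moser_de_bruijn n = (if n = 0 then True else n mod 4 \<le> 1 \<and> moser_de_bruijn (n div 4))"

declare moser_de_bruijn.simps [simp del]

lemma moser_de_bruijn_0 [simp]: "moser_de_bruijn 0"
  by (simp add: moser_de_bruijn.simps)

lemma moser_de_bruijn_iff: "moser_de_bruijn n \<longleftrightarrow> n mod 4 \<le> 1 \<and> moser_de_bruijn (n div 4)"
  by (cases "n = 0") (simp_all add: moser_de_bruijn.simps[of n])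

lemma moser_de_bruijn_4_mult_add:
  "r \<le> 1 \<Longrightarrow> moser_de_bruijn (4 * t + r) \<longleftrightarrow> moser_de_bruijn t"
  by (subst moser_de_bruijn_iff) simp

lemma moser_de_bruijn_decomposition_exists:
  "\<exists>a b. moser_de_bruijn a \<and> moser_de_bruijn b \<and> a + 2 * b = N"
proof (induction N rule: less_induct)
  case (less N)
  show ?case
  proof (cases "N = 0")
    case True
    then show ?thesis by auto
  next
    case False
    then have "N div 4 < N"
      by simp
    then obtain a b where ab: "moser_de_bruijn a" "moser_de_bruijn b" "a + 2 * b = N div 4"
      using less.IH by blast
    have "(4 * a + N mod 2) + 2 * (4 * b + N div 2 mod 2)
        = 4 * (a + 2 * b) + (2 * (N div 2 mod 2) + N mod 2)"
      by simp
    also have "\<dots> = 4 * (N div 4) + N mod 4"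
      using ab(3) mod_mult2_eq[of N 2 2] by simp
    finally have "(4 * a + N mod 2) + 2 * (4 * b + N div 2 mod 2) = N"
      by simp
    moreover have "N mod 2 \<le> 1" "N div 2 mod 2 \<le> 1"
      by simp_all
    ultimately show ?thesis
      using ab(1,2) moser_de_bruijn_4_mult_add by blast
  qed
qed

lemma add_double_no_carry:
  fixes a b :: nat
  assumes "a mod 4 \<le> 1" and "b mod 4 \<le> 1"
  shows "(a + 2 * b) div 4 = a div 4 + 2 * (b div 4)" and "(a + 2 * b) mod 2 = a mod 4"
proof -
  define a1 a0 b1 b0 where "a1 = a div 4" and "a0 = a mod 4" and "b1 = b div 4" and "b0 = b mod 4"
  have "a = 4 * a1 + a0" "b = 4 * b1 + b0"
    by (simp_all add: a1_def a0_def b1_def b0_def)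
  then have eq: "a + 2 * b = 4 * (a1 + 2 * b1) + (a0 + 2 * b0)"
    by simp
  have "a + 2 * b = 2 * (2 * (a1 + 2 * b1) + b0) + a0"
    unfolding eq by simp
  moreover have "a0 + 2 * b0 < 4" "a0 < 2"
    using assms by (simp_all add: a0_def b0_def)
  ultimately have "(a + 2 * b) div 4 = a1 + 2 * b1" "(a + 2 * b) mod 2 = a0"
    using eq by (simp_all only: div_mult_self4 mod_mult_self4 div_less mod_less) simp
  then show "(a + 2 * b) div 4 = a div 4 + 2 * (b div 4)" "(a + 2 * b) mod 2 = a mod 4"
    by (simp_all only: a1_def a0_def b1_def)
qed

lemma moser_de_bruijn_decomposition_unique:
  assumes "moser_de_bruijn a" "moser_de_bruijn b" "a + 2 * b = N"
    and "moser_de_bruijn a'" "moser_de_bruijn b'" "a' + 2 * b' = N"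
  shows "a = a'"
  using assms
proof (induction N arbitrary: a b a' b' rule: less_induct)
  case (less N)
  show ?case
  proof (cases "N = 0")
    case True
    then show ?thesis using less.prems by simp
  next
    case False
    have digits: "a mod 4 \<le> 1" "b mod 4 \<le> 1" "a' mod 4 \<le> 1" "b' mod 4 \<le> 1"
      and high: "moser_de_bruijn (a div 4)" "moser_de_bruijn (b div 4)"
        "moser_de_bruijn (a' div 4)" "moser_de_bruijn (b' div 4)"
      using less.prems moser_de_bruijn_iff by blast+
    have "a div 4 + 2 * (b div 4) = N div 4 \<and> a mod 4 = N mod 2"
      using add_double_no_carry[OF digits(1,2)] less.prems(3) by simp
    moreover have "a' div 4 + 2 * (b' div 4) = N div 4 \<and> a' mod 4 = N mod 2"
      using add_double_no_carry[OF digits(3,4)] less.prems(6) by simp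
    moreover have "N div 4 < N"
      using False by simp
    ultimately have "a div 4 = a' div 4" "a mod 4 = a' mod 4"
      using less.IH high by metis+
    then show ?thesis
      by (metis div_mult_mod_eq)
  qed
qed

lemma moser_de_bruijn_double_less:
  "moser_de_bruijn s \<Longrightarrow> s < 4 ^ m \<Longrightarrow> 2 * s < 4 ^ m"
proof (induction m arbitrary: s)
  case 0
  then show ?case by simp
next
  case (Suc m)
  have "s div 4 < 4 ^ m"
    using Suc.prems(2) by (simp add: less_mult_imp_div_less mult.commute)
  then have "2 * (s div 4) < 4 ^ m"
    using Suc moser_de_bruijn_iff by blast
  moreover have "s mod 4 \<le> 1"
    using Suc.prems(1) moser_de_bruijn_iff by blast
  moreover have "s = 4 * (s div 4) + s mod 4" "(4::nat) ^ Suc m = 4 * 4 ^ m"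
    by simp_all
  ultimately show ?case
    by linarith
qed

lemma card_moser_de_bruijn_less: "card {s. moser_de_bruijn s \<and> s < 4 ^ m} = 2 ^ m"
proof (induction m)
  case 0
  have "{s. moser_de_bruijn s \<and> s < 4 ^ 0} = {0}" by auto
  then show ?case by simp
next
  case (Suc m)
  define A where "A = {s. moser_de_bruijn s \<and> s < 4 ^ m}"
  define f where "f = (\<lambda>(t, r). 4 * t + r :: nat)"
  have "{s. moser_de_bruijn s \<and> s < 4 ^ Suc m} = f ` (A \<times> {0, 1})"
  proof (rule set_eqI, rule iffI)
    fix s
    assume s: "s \<in> {s. moser_de_bruijn s \<and> s < 4 ^ Suc m}"
    then have "s div 4 \<in> A" "s mod 4 \<in> {0, 1}"
      using moser_de_bruijn_iff[of s] by (auto simp: A_def less_mult_imp_div_less mult.commute)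
    then show "s \<in> f ` (A \<times> {0, 1})"
      by (intro image_eqI[of _ _ "(s div 4, s mod 4)"]) (simp_all add: f_def)
  qed (auto simp: A_def f_def moser_de_bruijn_4_mult_add[of 0, simplified]
      moser_de_bruijn_4_mult_add[of 1, simplified])
  moreover have "inj_on f (A \<times> {0, 1})"
    by (rule inj_on_inverseI[where g = "\<lambda>s. (s div 4, s mod 4)"]) (auto simp: f_def)
  ultimately show ?case
    using Suc.IH by (simp add: card_image card_cartesian_product A_def)
qed

definition moser_de_bruijn_fps :: "nat \<Rightarrow> bit fps" where
  "moser_de_bruijn_fps k = Abs_fps (\<lambda>n. of_bool (k dvd n \<and> moser_de_bruijn (n div k)))"

lemma moser_de_bruijn_fps_square: "(moser_de_bruijn_fps k)^2 = moser_de_bruijn_fps (2 * k)"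
proof (rule fps_ext)
  fix n
  show "(moser_de_bruijn_fps k ^ 2) $ n = moser_de_bruijn_fps (2 * k) $ n"
  proof (cases "even n")
    case True
    then obtain j where "n = 2 * j" ..
    then show ?thesis
      by (simp add: fps_bit_square_nth moser_de_bruijn_fps_def)
  next
    case False
    then have "\<not> 2 * k dvd n"
      by (meson dvd_mult_left)
    then show ?thesis
      using False by (simp add: fps_bit_square_nth moser_de_bruijn_fps_def)
  qed
qed

lemma moser_de_bruijn_fps_mult_double_nth:
  assumes "0 < k"
  shows "(moser_de_bruijn_fps k * moser_de_bruijn_fps (2 * k)) $ n = of_bool (k dvd n)"
proof -
  define C where "C i \<longleftrightarrow> k dvd i \<and> moser_de_bruijn (i div k)
    \<and> 2 * k dvd n - i \<and> moser_de_bruijn ((n - i) div (2 * k))" for i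
  have "(moser_de_bruijn_fps k * moser_de_bruijn_fps (2 * k)) $ n = (\<Sum>i=0..n. of_bool (C i))"
    by (simp add: fps_mult_nth moser_de_bruijn_fps_def C_def flip: of_bool_conj)
  also have "\<dots> = of_nat (card ({0..n} \<inter> {i. C i}))"
    by simp
  also have "card ({0..n} \<inter> {i. C i}) = of_bool (k dvd n)"
  proof (cases "k dvd n")
    case True
    obtain a b where ab: "moser_de_bruijn a" "moser_de_bruijn b" "a + 2 * b = n div k"
      using moser_de_bruijn_decomposition_exists by blast
    have "{0..n} \<inter> {i. C i} = {k * a}"
    proof (rule set_eqI, rule iffI)
      fix i
      assume "i \<in> {0..n} \<inter> {i. C i}"
      then have i: "i \<le> n" "k dvd i" "moser_de_bruijn (i div k)"
          "2 * k dvd n - i" "moser_de_bruijn ((n - i) div (2 * k))"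
        unfolding C_def by auto
      have "k * (i div k + 2 * ((n - i) div (2 * k))) = k * (i div k) + 2 * k * ((n - i) div (2 * k))"
        by (simp add: algebra_simps)
      also have "\<dots> = k * (n div k)"
        using i(1,2,4) True by simp
      finally have "i div k + 2 * ((n - i) div (2 * k)) = n div k"
        using assms by simp
      then have "i div k = a"
        using moser_de_bruijn_decomposition_unique[OF i(3,5) _ ab] by blast
      then show "i \<in> {k * a}"
        using i(2) by auto
    next
      fix i
      assume "i \<in> {k * a}"
      moreover have "n = k * (a + 2 * b)"
        using ab(3) True by simp
      then have "n = k * a + 2 * k * b"
        by (simp add: algebra_simps)
      ultimately show "i \<in> {0..n} \<inter> {i. C i}"
        using ab assms by (simp add: C_def)
    qed
    then show ?thesis
      using True by simp
  next
    case False
    have "\<not> C i" if "i \<le> n" for i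
    proof
      assume "C i"
      then have "k dvd i" "k dvd n - i"
        unfolding C_def by (auto intro: dvd_mult_left)
      then have "k dvd i + (n - i)"
        by (rule dvd_add)
      then show False
        using False that by simp
    qed
    then show ?thesis
      using False by auto
  qed
  finally show ?thesis
    by simp
qed

lemma moser_de_bruijn_fps_cube:
  assumes "0 < k"
  shows "(1 + fps_X ^ k) * moser_de_bruijn_fps k ^ 3 = 1"
proof -
  have "moser_de_bruijn_fps k * moser_de_bruijn_fps (2 * k) = Abs_fps (\<lambda>n. of_bool (k dvd n))"
    using moser_de_bruijn_fps_mult_double_nth[OF assms] by (simp add: fps_eq_iff)
  then show ?thesis
    using fps_bit_geometric[OF assms]
    by (simp add: power3_eq_cube moser_de_bruijn_fps_square[symmetric] power2_eq_square mult.assoc)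
qed

lemma sum_fps_X_power_mult_moser_de_bruijn_fps_nth:
  assumes "r \<le> k"
  shows "((\<Sum>i<r. fps_X ^ i) * moser_de_bruijn_fps k) $ n
    = of_bool (n mod k < r \<and> moser_de_bruijn (n div k))"
proof -
  have "(fps_X ^ i * moser_de_bruijn_fps k) $ n
      = (if i = n mod k then of_bool (moser_de_bruijn (n div k)) else 0)" if "i < r" for i
  proof -
    have "i \<le> n \<and> k dvd n - i \<longleftrightarrow> i = n mod k"
      using that assms mod_eq_dvd_iff_nat[of i n k] by (auto simp: mod_less_eq_dividend)
    moreover have "(n - n mod k) div k = n div k"
      using that assms by (simp add: minus_mod_eq_mult_div)
    ultimately show ?thesis
      by (auto simp: moser_de_bruijn_fps_def fps_X_power_mult_nth)
  qed
  then have "((\<Sum>i<r. fps_X ^ i) * moser_de_bruijn_fps k) $ n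
      = (\<Sum>i<r. if i = n mod k then of_bool (moser_de_bruijn (n div k)) else 0)"
    by (simp add: sum_distrib_right fps_sum_nth)
  then show ?thesis
    by simp
qed

section \<open>The compositional inverse of the Thue--Morse series\<close>

definition G_closed_form :: "bit fps" where
  "G_closed_form = fps_shift 1 ((\<Sum>i<4. fps_X ^ i) * moser_de_bruijn_fps 8 + 1 + fps_X)"

lemma G_closed_form_nth:
  "G_closed_form $ m = of_bool (Suc m mod 8 < 4 \<and> moser_de_bruijn (Suc m div 8)) + of_bool (m = 0)"
  by (simp add: G_closed_form_def sum_fps_X_power_mult_moser_de_bruijn_fps_nth)

lemma G_closed_form_nth_0: "G_closed_form $ 0 = 0"
  by (simp add: G_closed_form_nth)

lemma fps_X_mult_G_closed_form:
  "fps_X * G_closed_form = (\<Sum>i<4. fps_X ^ i) * moser_de_bruijn_fps 8 + 1 + fps_X"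
proof (rule fps_ext)
  fix n
  have "((\<Sum>i<4. fps_X ^ i) * moser_de_bruijn_fps 8 + 1 + fps_X) $ 0 = (0 :: bit)"
    by (simp add: sum_fps_X_power_mult_moser_de_bruijn_fps_nth del: fps_mult_nth_0)
  then show "(fps_X * G_closed_form) $ n
      = ((\<Sum>i<4. fps_X ^ i) * moser_de_bruijn_fps 8 + 1 + fps_X) $ n"
    by (simp add: G_closed_form_def del: fps_add_nth)
qed

lemma G_closed_form_equation:
  "(1 + G_closed_form^2) * fps_X
    = (1 + G_closed_form^2) * (1 + G_closed_form) * fps_X^2 + G_closed_form"
proof -
  define X :: "bit fps" where "X = fps_X"
  define G where "G = G_closed_form"
  define w where "w = (\<Sum>i<4. X ^ i) * moser_de_bruijn_fps 8"
  define u where "u = X * G"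
  have u: "u = w + 1 + X"
    unfolding u_def w_def X_def G_def by (rule fps_X_mult_G_closed_form)
  have "(\<Sum>i<4. X ^ i) ^ 3 = (1 + X) * (1 + X ^ 8)"
    by (simp add: eval_nat_numeral algebra_simps)
  then have w3: "w ^ 3 = 1 + X"
    using moser_de_bruijn_fps_cube[of 8]
    by (simp add: w_def X_def power_mult_distrib mult.assoc)
  \<comment> \<open>the equation, multiplied by \<open>X\<^sup>3\<close>, becomes \<open>w\<^sup>3 = 1 + X\<close> in terms of \<open>u = X G = w + 1 + X\<close>\<close>
  have "X^2 * (X^2 + u^2) + X^2 * ((X^2 + u^2) * (X + u) + u) = X^2 * (w^3 + 1 + X)"
    unfolding u by (simp add: algebra_simps power2_eq_square power3_eq_cube)
  then have "X^2 * (X^2 + u^2) = X^2 * ((X^2 + u^2) * (X + u) + u)"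
    using w3 by (simp add: fps_bit_add_eq_0_iff)
  then have "X^3 * ((1 + G^2) * X) = X^3 * ((1 + G^2) * (1 + G) * X^2 + G)"
    unfolding u_def by (simp add: algebra_simps power2_eq_square power3_eq_cube)
  moreover have "X^3 \<noteq> 0"
    unfolding X_def by simp
  ultimately show ?thesis
    unfolding X_def G_def by simp
qed

lemma F_tm_compose_G_closed_form: "F_tm oo G_closed_form = fps_X"
proof (rule fps_bit_quadratic_unique)
  let ?G = G_closed_form
  have "((1 + fps_X^2) * F_tm) oo ?G = ((1 + fps_X^2) * (1 + fps_X) * F_tm^2 + fps_X) oo ?G"
    by (simp only: F_tm_functional_equation)
  then show "(1 + ?G^2) * (F_tm oo ?G) = (1 + ?G^2) * (1 + ?G) * (F_tm oo ?G)^2 + ?G"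
    by (simp add: G_closed_form_nth_0 fps_compose_add_distrib fps_compose_mult_distrib
        fps_compose_power[OF G_closed_form_nth_0, symmetric])
  show "(1 + ?G^2) * fps_X = (1 + ?G^2) * (1 + ?G) * fps_X^2 + ?G"
    by (rule G_closed_form_equation)
qed (simp_all add: G_closed_form_nth_0 F_tm_nth)

lemma G_tm_eq_G_closed_form: "G_tm = G_closed_form"
  unfolding G_tm_def
proof (rule fps_inv_eqI)
  show "F_tm $ 1 \<noteq> 0"
    using tm_double_Suc[of 0] by (simp add: F_tm_nth)
qed (simp_all add: F_tm_nth G_closed_form_nth_0 F_tm_compose_G_closed_form)

lemma c_tm_eq:
  "0 < m \<Longrightarrow> c_tm m = of_bool (Suc m mod 8 < 4 \<and> moser_de_bruijn (Suc m div 8))"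
  by (simp add: c_tm_def G_tm_eq_G_closed_form G_closed_form_nth)

section \<open>The zeros of the inverse\<close>

definition twice_moser_de_bruijn :: "nat \<Rightarrow> bool" where
  "twice_moser_de_bruijn j \<longleftrightarrow> even j \<and> moser_de_bruijn (j div 2)"

lemma c_tm_eq_0_iff: "0 < m \<Longrightarrow> c_tm m = 0 \<longleftrightarrow> \<not> twice_moser_de_bruijn (Suc m div 4)"
proof -
  have "Suc m mod 8 < 4 \<longleftrightarrow> even (Suc m div 4)"
    by presburger
  moreover have "Suc m div 8 = Suc m div 4 div 2"
    by (simp add: div_mult2_eq[symmetric])
  ultimately show "0 < m \<Longrightarrow> ?thesis"
    by (simp add: c_tm_eq twice_moser_de_bruijn_def)
qed

lemma not_twice_moser_de_bruijn:
  assumes "4 ^ m \<le> j" and "j < 2 * 4 ^ m"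
  shows "\<not> twice_moser_de_bruijn j"
proof
  assume "twice_moser_de_bruijn j"
  then have "even j" "moser_de_bruijn (j div 2)"
    by (simp_all add: twice_moser_de_bruijn_def)
  moreover have "j div 2 < 4 ^ m"
    using assms(2) by simp
  ultimately have "j < 4 ^ m"
    using moser_de_bruijn_double_less by fastforce
  then show False
    using assms(1) by simp
qed

lemma card_twice_moser_de_bruijn_less:
  assumes "4 ^ m \<le> e" and "e \<le> 2 * 4 ^ m"
  shows "card {j. j < e \<and> twice_moser_de_bruijn j} = 2 ^ m"
proof -
  have "{j. j < e \<and> twice_moser_de_bruijn j} = (\<lambda>s. 2 * s) ` {s. moser_de_bruijn s \<and> s < 4 ^ m}"
  proof (rule set_eqI, rule iffI)
    fix j
    assume "j \<in> {j. j < e \<and> twice_moser_de_bruijn j}"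
    then show "j \<in> (\<lambda>s. 2 * s) ` {s. moser_de_bruijn s \<and> s < 4 ^ m}"
      using assms(2) by (auto simp: twice_moser_de_bruijn_def intro!: image_eqI[of _ _ "j div 2"])
  next
    fix j
    assume "j \<in> (\<lambda>s. 2 * s) ` {s. moser_de_bruijn s \<and> s < 4 ^ m}"
    then show "j \<in> {j. j < e \<and> twice_moser_de_bruijn j}"
      using assms(1) moser_de_bruijn_double_less by (force simp: twice_moser_de_bruijn_def)
  qed
  then show ?thesis
    by (simp add: card_image card_moser_de_bruijn_less inj_on_def)
qed

lemma d_tm_mult_4:
  assumes "\<not> twice_moser_de_bruijn e" and "card {j. j < e \<and> \<not> twice_moser_de_bruijn j} = n"
  shows "d_tm (4 * n) = 4 * e - 1"
proof -
  define Z where "Z = {m. m \<ge> 1 \<and> c_tm m = 0}"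
  have Z: "Z = {m. 1 \<le> m \<and> \<not> twice_moser_de_bruijn (Suc m div 4)}"
    unfolding Z_def using c_tm_eq_0_iff by auto
  have "twice_moser_de_bruijn 0"
    by (simp add: twice_moser_de_bruijn_def)
  then have "0 < e"
    using assms(1) by (cases e) auto
  have "\<exists>y\<ge>k. y \<in> Z" for k
    by (intro exI[of _ "8 * k + 3"]) (simp add: Z twice_moser_de_bruijn_def)
  then have "infinite Z"
    by (simp add: infinite_nat_iff_unbounded_le)
  have "4 * e - 1 \<in> Z"
    using assms(1) \<open>0 < e\<close> by (simp add: Z)
  have "Suc ` {y \<in> Z. y < 4 * e - 1} = {w. w < 4 * e \<and> \<not> twice_moser_de_bruijn (w div 4)}"
  proof (rule set_eqI, rule iffI)
    fix w
    assume w: "w \<in> {w. w < 4 * e \<and> \<not> twice_moser_de_bruijn (w div 4)}"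
    then have "4 \<le> w"
      using \<open>twice_moser_de_bruijn 0\<close> by (cases "w < 4") auto
    then have "w = Suc (w - 1)" "w - 1 \<in> {y \<in> Z. y < 4 * e - 1}"
      using w by (auto simp: Z)
    then show "w \<in> Suc ` {y \<in> Z. y < 4 * e - 1}"
      by blast
  qed (auto simp: Z)
  then have "card {y \<in> Z. y < 4 * e - 1} = 4 * n"
    using card_less_mult_div[of 4 e "\<lambda>j. \<not> twice_moser_de_bruijn j"] assms(2)
    by (metis card_image inj_Suc inj_on_subset subset_UNIV)
  then show ?thesis
    unfolding d_tm_def Z_def[symmetric]
    using enumerate_eqI[OF \<open>infinite Z\<close> \<open>4 * e - 1 \<in> Z\<close>] by blast
qed

lemma add_pow2_between_pow4:
  fixes m n :: nat
  assumes "0 < m" and "4 ^ m \<le> n" and "3 * n \<le> 4 * 4 ^ m"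
  shows "4 ^ m \<le> n + 2 ^ m" and "n + 2 ^ m < 2 * 4 ^ m"
proof -
  have "(2::nat) \<le> 2 ^ m"
    using power_increasing[of 1 m "2::nat"] assms(1) by simp
  then have "(2::nat) * 2 ^ m \<le> 2 ^ m * 2 ^ m"
    by (rule mult_right_mono) simp
  moreover have "(4::nat) ^ m = 2 ^ m * 2 ^ m" "0 < (2::nat) ^ m"
    by (simp_all flip: power_mult_distrib)
  ultimately have "3 * 2 ^ m < 2 * (4::nat) ^ m"
    by linarith
  then show "4 ^ m \<le> n + 2 ^ m" "n + 2 ^ m < 2 * 4 ^ m"
    using assms(2,3) by linarith+
qed

lemma d_tm_mult_4_near_pow4:
  fixes m n :: nat
  assumes "0 < m" and "4 ^ m \<le> n" and "3 * n \<le> 4 * 4 ^ m"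
  shows "d_tm (4 * n) = 4 * (n + 2 ^ m) - 1"
proof (rule d_tm_mult_4)
  note e = add_pow2_between_pow4[OF assms]
  show "\<not> twice_moser_de_bruijn (n + 2 ^ m)"
    using not_twice_moser_de_bruijn[OF e] .
  have "{j. j < n + 2 ^ m \<and> \<not> twice_moser_de_bruijn j}
      = {..<n + 2 ^ m} - {j. j < n + 2 ^ m \<and> twice_moser_de_bruijn j}"
    by auto
  then show "card {j. j < n + 2 ^ m \<and> \<not> twice_moser_de_bruijn j} = n"
    using card_twice_moser_de_bruijn_less[of m "n + 2 ^ m"] e
    by (simp add: card_Diff_subset subset_iff)
qed

theorem mainTheorem12:
  fixes m n :: nat
  assumes "m \<ge> 2"
    and "2 ^ (2*m) \<le> n"
    and "real n \<le> 4/3 * 2 ^ (2*m)"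
  shows "z_tm n = 0"
proof -
  have pow4: "(2::nat) ^ (2 * m) = 4 ^ m"
    by (simp add: power_mult)
  then have "real (3 * n) \<le> real (4 * 4 ^ m)"
    using assms(3) by (simp add: power_mult)
  then have "d_tm (4 * n) = 4 * (n + 2 ^ m) - 1"
    using d_tm_mult_4_near_pow4[of m n] assms(1,2) pow4 by (simp only: of_nat_le_iff)
  then have "z_tm n = int (2 ^ m) mod 2"
    by (simp add: z_tm_def)
  then show ?thesis
    using assms(1) by simp
qed

end
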